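(* Let $\mu^s$ be a positive policy. Then: (a) for every $x\in\mathcal X$, $\kappa(\mu^s|x)=\max_{a\in\mathcal A(x)}\frac{1}{\mu^s(a|x)}\Big(1+\sum_{x'\text{ directly follows }(x,a)}\kappa(\mu^s|x')\Big)$; (b) $\kappa(\mu^s)=\sum_{x\in\mathcal X_1}\kappa(\mu^s|x)$; (c) for every $x\in\mathcal X$, $\kappa(\mu^s|x)\ge A^\tau(x)$, with equality for all $x$ simultaneously when $\mu^s=\mu^\star$, the balanced policy defined by $\mu^\star(a|x)=A^\tau(x,a)/A^\tau(x)$; (d) $\kappa(\mu^\star)=A_{\mathcal X}$.
   Context: Game structure. Fix $H\ge1$. The min-player's information sets form a finite set $\mathcal X$; each $x$ has a depth $h(x)\in\{1,\dots,H\}$ and a finite nonempty action set $\mathcal A(x)$; $\mathcal X_1$ is the set of depth-1 information sets. Perfect recall: every $x$ of depth $h$ has a unique history $(x_1,a_1,\dots,x_{h-1},a_{h-1},x_h=x)$ with $x_i$ of depth $i$, $a_i\in\mathcal A(x_i)$, and histories extend each other along the tree. $x'$ directly follows $(x,a)$ if $h(x')=h(x)+1$ and the history of $x'$ contains $x$ followed by $a$; $x$ is in the history of $x'$ if $x=x'_i$ for some $i$ (including $x=x'$); $(x,a)$ is in the history of $x'$ if $x$ is in the history of $x'$, $x\neq x'$, and the history of $x'$ contains $x$ followed by $a$. $A_{\mathcal X}=\sum_x|\mathcal A(x)|$. A policy is $\mu=(\mu(\cdot|x))_x$, $\mu(\cdot|x)\in\Delta_{\mathcal A(x)}$; $\Pi_{\min}$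 the set of policies; positive if all $\mu(a|x)>0$. Realization plan: $\mu_{1:}(x,a)=\prod_{i=1}^h\mu(a_i|x_i)$ (with $a_h=a$). For $x$ of depth $h$ and $(x',a')$ with $x$ in the history of $x'$ ($x'$ of depth $h'$, history $(x'_1,a'_1,\dots,x'_{h'})$, $a'_{h'}=a'$): $\mu_{h:}(x',a')=\prod_{i=h}^{h'}\mu(a'_i|x'_i)$. Define $\kappa(\mu^s)=\max_{\mu\in\Pi_{\min}}\sum_{x,a}\mu_{1:}(x,a)/\mu^s_{1:}(x,a)$ and, for $x$ of depth $h$, $\kappa(\mu^s|x)=\max_{\mu\in\Pi_{\min}}\sum_{x':\,x\text{ in history of }x'}\sum_{a'\in\mathcal A(x')}\mu_{h:}(x',a')/\mu^s_{h:}(x',a')$. Subtree action counts: $A^\tau(x,a)=1+\sum_{x':\,(x,a)\text{ in history of }x'}|\mathcal A(x')|$ and $A^\tau(x)=\sum_{a\in\mathcal A(x)}A^\tau(x,a)$. *)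

theory Defs
  imports Complex_Main
begin

text \<open>Tree (perfect-recall) structure of the min-player's information sets.
  X: information sets; h: depth; A: action sets; par x = None for depth-1 sets,
  par x = Some (y, b) if the history of x ends with ... y, b, x.
  The history of x is then the chain obtained by iterating par.\<close>

definition game_structure ::
  "'x set \<Rightarrow> nat \<Rightarrow> ('x \<Rightarrow> nat) \<Rightarrow> ('x \<Rightarrow> 'a set) \<Rightarrow> ('x \<Rightarrow> ('x \<times> 'a) option) \<Rightarrow> bool" where
  "game_structure X H h A par \<longleftrightarrow>
     H \<ge> 1 \<and> finite X \<and>
     (\<forall>x\<in>X. finite (A x) \<and> A x \<noteq> {} \<and> 1 \<le> h x \<and> h x \<le> H \<and>
        (h x = 1 \<longleftrightarrow> par x = None) \<and>
        (\<forall>y b. par x = Some (y, b) \<longrightarrow> y \<in> X \<and> b \<in> A y \<and> h x = h y + 1))"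

inductive in_hist :: "('x \<Rightarrow> ('x \<times> 'a) option) \<Rightarrow> 'x \<Rightarrow> 'x \<Rightarrow> bool" for par where
  refl: "in_hist par x x"
| step: "par x' = Some (y, b) \<Longrightarrow> in_hist par x y \<Longrightarrow> in_hist par x x'"

inductive act_hist :: "('x \<Rightarrow> ('x \<times> 'a) option) \<Rightarrow> 'x \<Rightarrow> 'a \<Rightarrow> 'x \<Rightarrow> bool" for par where
  direct: "par x' = Some (x, a) \<Longrightarrow> act_hist par x a x'"
| step: "par x' = Some (y, b) \<Longrightarrow> act_hist par x a y \<Longrightarrow> act_hist par x a x'"

definition directly_follows :: "('x \<Rightarrow> ('x \<times> 'a) option) \<Rightarrow> 'x \<Rightarrow> 'x \<Rightarrow> 'a \<Rightarrow> bool" where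
  "directly_follows par x' x a \<longleftrightarrow> par x' = Some (x, a)"

definition is_policy :: "'x set \<Rightarrow> ('x \<Rightarrow> 'a set) \<Rightarrow> ('x \<Rightarrow> 'a \<Rightarrow> real) \<Rightarrow> bool" where
  "is_policy X A \<mu> \<longleftrightarrow> (\<forall>x\<in>X. (\<forall>a\<in>A x. \<mu> x a \<ge> 0) \<and> (\<Sum>a\<in>A x. \<mu> x a) = 1)"

definition positive_policy :: "'x set \<Rightarrow> ('x \<Rightarrow> 'a set) \<Rightarrow> ('x \<Rightarrow> 'a \<Rightarrow> real) \<Rightarrow> bool" where
  "positive_policy X A \<mu> \<longleftrightarrow> is_policy X A \<mu> \<and> (\<forall>x\<in>X. \<forall>a\<in>A x. \<mu> x a > 0)"

definition real_plan :: "('x \<Rightarrow> ('x \<times> 'a) option) \<Rightarrow> ('x \<Rightarrow> 'a \<Rightarrow> real) \<Rightarrow> 'x \<Rightarrow> 'a \<Rightarrow> real" where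
  "real_plan par \<mu> x a = \<mu> x a * (\<Prod>(y, b)\<in>{(y, b). act_hist par y b x}. \<mu> y b)"

definition real_plan_from :: "('x \<Rightarrow> ('x \<times> 'a) option) \<Rightarrow> ('x \<Rightarrow> 'a \<Rightarrow> real) \<Rightarrow> 'x \<Rightarrow> 'x \<Rightarrow> 'a \<Rightarrow> real" where
  "real_plan_from par \<mu> x x' a' =
     \<mu> x' a' * (\<Prod>(y, b)\<in>{(y, b). act_hist par y b x' \<and> in_hist par x y}. \<mu> y b)"

definition kappa :: "'x set \<Rightarrow> ('x \<Rightarrow> 'a set) \<Rightarrow> ('x \<Rightarrow> ('x \<times> 'a) option) \<Rightarrow> ('x \<Rightarrow> 'a \<Rightarrow> real) \<Rightarrow> real" where
  "kappa X A par \<mu>s = (SUP \<mu>\<in>{\<mu>. is_policy X A \<mu>}.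
      \<Sum>x\<in>X. \<Sum>a\<in>A x. real_plan par \<mu> x a / real_plan par \<mu>s x a)"

definition kappa_at :: "'x set \<Rightarrow> ('x \<Rightarrow> 'a set) \<Rightarrow> ('x \<Rightarrow> ('x \<times> 'a) option) \<Rightarrow> ('x \<Rightarrow> 'a \<Rightarrow> real) \<Rightarrow> 'x \<Rightarrow> real" where
  "kappa_at X A par \<mu>s x = (SUP \<mu>\<in>{\<mu>. is_policy X A \<mu>}.
      \<Sum>x'\<in>{x'\<in>X. in_hist par x x'}. \<Sum>a'\<in>A x'.
         real_plan_from par \<mu> x x' a' / real_plan_from par \<mu>s x x' a')"

definition A_tau_act :: "'x set \<Rightarrow> ('x \<Rightarrow> 'a set) \<Rightarrow> ('x \<Rightarrow> ('x \<times> 'a) option) \<Rightarrow> 'x \<Rightarrow> 'a \<Rightarrow> nat" where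
  "A_tau_act X A par x a = 1 + (\<Sum>x'\<in>{x'\<in>X. act_hist par x a x'}. card (A x'))"

definition A_tau :: "'x set \<Rightarrow> ('x \<Rightarrow> 'a set) \<Rightarrow> ('x \<Rightarrow> ('x \<times> 'a) option) \<Rightarrow> 'x \<Rightarrow> nat" where
  "A_tau X A par x = (\<Sum>a\<in>A x. A_tau_act X A par x a)"

definition balanced_policy :: "'x set \<Rightarrow> ('x \<Rightarrow> 'a set) \<Rightarrow> ('x \<Rightarrow> ('x \<times> 'a) option) \<Rightarrow> 'x \<Rightarrow> 'a \<Rightarrow> real" where
  "balanced_policy X A par x a = real (A_tau_act X A par x a) / real (A_tau X A par x)"

definition total_actions :: "'x set \<Rightarrow> ('x \<Rightarrow> 'a set) \<Rightarrow> nat" where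
  "total_actions X A = (\<Sum>x\<in>X. card (A x))"

end

theory Submission
  imports Defs
begin

text \<open>The ratio sum of a policy mu over the subtree of an information set x factorizes along
  the tree: it is the sum over a of mu(a|x)/mu_s(a|x) * (1 + the ratio sums of the information
  sets directly following (x,a)). The children's terms depend on disjoint parts of mu, so going
  bottom-up they can be maximized separately, and what remains at x is linear in mu(.|x) and
  hence maximized at a vertex of the simplex. The greedy deterministic policy is thus optimal at
  all information sets at once, which gives the recursion for kappa(mu_s|x); kappa(mu_s) splits
  over the depth-1 sets because the full realization plan is the partial one taken from the root.
  The maximum over a also dominates the mu_s-weighted average, which is the sum over a of
  1 + the children's kappa values; by induction this is at least A_tau(x). For the balanced
  policy all the values being maximized equal A_tau(x).\<close>

lemma convex_combination_le:
  fixes w f :: "'b \<Rightarrow> real"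
  assumes "\<And>a. a \<in> S \<Longrightarrow> 0 \<le> w a" and "sum w S = 1" and "\<And>a. a \<in> S \<Longrightarrow> f a \<le> c"
  shows "(\<Sum>a\<in>S. w a * f a) \<le> c"
proof -
  have "(\<Sum>a\<in>S. w a * f a) \<le> (\<Sum>a\<in>S. w a * c)"
    using assms by (intro sum_mono mult_left_mono) auto
  also have "\<dots> = c"
    using assms(2) by (simp add: sum_distrib_right[symmetric])
  finally show ?thesis .
qed

lemma in_hist_trans: "in_hist par y z \<Longrightarrow> in_hist par x y \<Longrightarrow> in_hist par x z"
  by (induction rule: in_hist.induct) (auto intro: in_hist.step)

lemma in_hist_parent: "par c = Some (x, a) \<Longrightarrow> in_hist par x c"
  by (rule in_hist.step[OF _ in_hist.refl])

lemma act_hist_iff_in_hist: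
  "act_hist par x a x' \<longleftrightarrow> (\<exists>c. par c = Some (x, a) \<and> in_hist par c x')"
proof
  assume "act_hist par x a x'"
  then show "\<exists>c. par c = Some (x, a) \<and> in_hist par c x'"
    by (induction rule: act_hist.induct) (auto intro: in_hist.intros)
next
  assume "\<exists>c. par c = Some (x, a) \<and> in_hist par c x'"
  then obtain c where "in_hist par c x'" and "par c = Some (x, a)" by blast
  then show "act_hist par x a x'"
    by (induction rule: in_hist.induct) (auto intro: act_hist.intros)
qed

lemma in_hist_imp_eq_or_act_hist: "in_hist par x x' \<Longrightarrow> x = x' \<or> (\<exists>a. act_hist par x a x')"
  by (induction rule: in_hist.induct) (auto intro: act_hist.intros)

lemma act_hist_imp_in_hist: "act_hist par y b x' \<Longrightarrow> in_hist par y x'"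
  by (induction rule: act_hist.induct) (auto intro: in_hist.intros)

locale info_tree =
  fixes X :: "'x set" and H :: nat and h :: "'x \<Rightarrow> nat" and A :: "'x \<Rightarrow> 'a set"
    and par :: "'x \<Rightarrow> ('x \<times> 'a) option"
  assumes game_structure: "game_structure X H h A par"
begin

lemma finite_X: "finite X"
  using game_structure by (simp add: game_structure_def)

lemma finite_A: "x \<in> X \<Longrightarrow> finite (A x)"
  using game_structure by (simp add: game_structure_def)

lemma A_nonempty: "x \<in> X \<Longrightarrow> A x \<noteq> {}"
  using game_structure by (simp add: game_structure_def)

lemma depth_le_H: "x \<in> X \<Longrightarrow> h x \<le> H"
  using game_structure by (simp add: game_structure_def)

lemma depth_eq_1_iff: "x \<in> X \<Longrightarrow> h x = 1 \<longleftrightarrow> par x = None"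
  using game_structure by (simp add: game_structure_def)

lemma parent_props: "x \<in> X \<Longrightarrow> par x = Some (y, b) \<Longrightarrow> y \<in> X \<and> b \<in> A y \<and> h x = h y + 1"
  using game_structure unfolding game_structure_def by blast

lemma in_hist_props:
  "in_hist par c x \<Longrightarrow> x \<in> X \<Longrightarrow> c \<in> X \<and> h c \<le> h x \<and> (h c = h x \<longrightarrow> c = x)"
proof (induction rule: in_hist.induct)
  case (step x' y b x)
  then show ?case using parent_props[OF step.prems step.hyps(1)] by auto
qed simp

lemma in_hist_depth_unique:
  "in_hist par c x' \<Longrightarrow> x' \<in> X \<Longrightarrow> in_hist par d x' \<Longrightarrow> h c = h d \<Longrightarrow> c = d"
proof (induction arbitrary: d rule: in_hist.induct)
  case (refl x)
  then show ?case using in_hist_props by force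
next
  case (step x' y b c)
  have y: "y \<in> X" "h x' = h y + 1" using parent_props[OF step.prems(1) step.hyps(1)] by auto
  have "h c \<le> h y" using in_hist_props[OF step.hyps(2) y(1)] by simp
  from step.prems(2) show ?case
  proof (cases rule: in_hist.cases)
    case refl
    then show ?thesis using y \<open>h c \<le> h y\<close> step.prems by simp
  next
    case (step y' b')
    then show ?thesis using step.IH[OF y(1)] \<open>par x' = Some (y, b)\<close> \<open>h c = h d\<close> by simp
  qed
qed

lemma act_hist_props: "act_hist par y b x' \<Longrightarrow> x' \<in> X \<Longrightarrow> y \<in> X \<and> b \<in> A y \<and> h y < h x'"
proof -
  assume yb: "act_hist par y b x'" and x': "x' \<in> X"
  obtain c where c: "par c = Some (y, b)" "in_hist par c x'"
    using act_hist_iff_in_hist[THEN iffD1, OF yb] by blast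
  have "c \<in> X" "h c \<le> h x'" using in_hist_props[OF c(2) x'] by auto
  then show ?thesis using parent_props[OF _ c(1)] by auto
qed

lemma act_hist_action_unique:
  assumes "act_hist par x a1 x'" "act_hist par x a2 x'" "x' \<in> X"
  shows "a1 = a2"
proof -
  obtain c1 c2 where c: "par c1 = Some (x, a1)" "in_hist par c1 x'"
    "par c2 = Some (x, a2)" "in_hist par c2 x'"
    using assms(1,2) unfolding act_hist_iff_in_hist by blast
  have "c1 \<in> X" "c2 \<in> X" using in_hist_props[OF c(2) assms(3)] in_hist_props[OF c(4) assms(3)] by auto
  then have "h c1 = h c2" using parent_props c by force
  then have "c1 = c2" using in_hist_depth_unique c assms(3) by blast
  then show ?thesis using c by simp
qed

definition subtree :: "'x \<Rightarrow> 'x set" where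
  "subtree x = {x' \<in> X. in_hist par x x'}"

definition children :: "'x \<Rightarrow> 'a \<Rightarrow> 'x set" where
  "children x a = {c \<in> X. par c = Some (x, a)}"

lemma finite_subtree: "finite (subtree x)"
  using finite_X by (simp add: subtree_def)

lemma finite_children: "finite (children x a)"
  using finite_X by (simp add: children_def)

lemma children_props:
  "c \<in> children x a \<Longrightarrow> c \<in> X \<and> par c = Some (x, a) \<and> x \<in> X \<and> a \<in> A x \<and> h c = h x + 1"
  using parent_props[of c x a] by (simp add: children_def)

lemma subtree_eq_insert: "x \<in> X \<Longrightarrow> subtree x = insert x (\<Union>a\<in>A x. \<Union>c\<in>children x a. subtree c)"
proof (rule set_eqI, rule iffI)
  fix x' assume x: "x \<in> X" and "x' \<in> subtree x"
  then have x': "x' \<in> X" "in_hist par x x'" by (auto simp: subtree_def)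
  from in_hist_imp_eq_or_act_hist[OF x'(2)]
  show "x' \<in> insert x (\<Union>a\<in>A x. \<Union>c\<in>children x a. subtree c)"
  proof
    assume "\<exists>a. act_hist par x a x'"
    then obtain a c where c: "par c = Some (x, a)" "in_hist par c x'"
      by (auto simp: act_hist_iff_in_hist)
    then have "c \<in> X" using in_hist_props[OF c(2) x'(1)] by blast
    then show ?thesis using c x' parent_props[OF _ c(1)] by (auto simp: subtree_def children_def)
  qed simp
next
  fix x' assume "x \<in> X" and "x' \<in> insert x (\<Union>a\<in>A x. \<Union>c\<in>children x a. subtree c)"
  then consider "x' = x" | a c where "c \<in> children x a" "x' \<in> subtree c" by blast
  then show "x' \<in> subtree x"
  proof cases
    case 1
    then show ?thesis using \<open>x \<in> X\<close> by (simp add: subtree_def in_hist.refl)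
  next
    case 2
    then have "in_hist par x c" "in_hist par c x'" "x' \<in> X"
      using in_hist_parent by (auto simp: children_def subtree_def)
    then show ?thesis using in_hist_trans by (simp add: subtree_def)
  qed
qed

lemma subtrees_of_children_disjoint:
  assumes "c1 \<in> children x a1" "c2 \<in> children x a2" "subtree c1 \<inter> subtree c2 \<noteq> {}"
  shows "c1 = c2"
proof -
  obtain y where "y \<in> X" "in_hist par c1 y" "in_hist par c2 y"
    using assms(3) by (auto simp: subtree_def)
  moreover have "h c1 = h c2" using children_props assms(1,2) by simp
  ultimately show ?thesis using in_hist_depth_unique by blast
qed

lemma sum_Union_subtrees_children:
  "(\<Sum>y\<in>(\<Union>c\<in>children x a. subtree c). f y) = (\<Sum>c\<in>children x a. \<Sum>y\<in>subtree c. f y)"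
  using subtrees_of_children_disjoint
  by (intro sum.UNION_disjoint finite_children ballI finite_subtree) blast

lemma sum_subtree:
  assumes x: "x \<in> X"
  shows "(\<Sum>y\<in>subtree x. f y) = f x + (\<Sum>a\<in>A x. \<Sum>c\<in>children x a. \<Sum>y\<in>subtree c. f y)"
proof -
  have "(\<Sum>y\<in>(\<Union>a\<in>A x. \<Union>c\<in>children x a. subtree c). f y)
      = (\<Sum>a\<in>A x. \<Sum>y\<in>(\<Union>c\<in>children x a. subtree c). f y)"
  proof (rule sum.UNION_disjoint)
    show "\<forall>i\<in>A x. \<forall>j\<in>A x. i \<noteq> j \<longrightarrow>
        (\<Union>c\<in>children x i. subtree c) \<inter> (\<Union>c\<in>children x j. subtree c) = {}"
      using subtrees_of_children_disjoint by (fastforce simp: children_def)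
  qed (use finite_A[OF x] finite_subtree finite_children in auto)
  moreover have "x \<notin> subtree c" if "c \<in> children x a" for a c
  proof
    assume "x \<in> subtree c"
    then have "h c \<le> h x" using in_hist_props x by (simp add: subtree_def)
    then show False using children_props[OF that] by simp
  qed
  ultimately show ?thesis
    using finite_subtree[of x] by (simp add: subtree_eq_insert[OF x] sum_Union_subtrees_children)
qed

lemma subtree_induct[consumes 1, case_names step]:
  assumes "x \<in> X"
    and step: "\<And>x. x \<in> X \<Longrightarrow> (\<And>a c. c \<in> children x a \<Longrightarrow> P c) \<Longrightarrow> P x"
  shows "P x"
  using assms(1)
proof (induction "H - h x" arbitrary: x rule: less_induct)
  case less
  show ?case
  proof (rule step[OF less.prems])
    fix a c assume c: "c \<in> children x a"
    then have "H - h c < H - h x" using children_props depth_le_H by fastforce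
    then show "P c" using less.hyps c children_props by blast
  qed
qed

lemma act_hist_set_eq: "{x' \<in> X. act_hist par x a x'} = (\<Union>c\<in>children x a. subtree c)"
proof (rule set_eqI, rule iffI)
  fix x' assume "x' \<in> {x' \<in> X. act_hist par x a x'}"
  then have x': "x' \<in> X" "act_hist par x a x'" by auto
  obtain c where c: "par c = Some (x, a)" "in_hist par c x'"
    using act_hist_iff_in_hist[THEN iffD1, OF x'(2)] by blast
  then have "c \<in> X" using in_hist_props[OF c(2) x'(1)] by blast
  then show "x' \<in> (\<Union>c\<in>children x a. subtree c)"
    using c x' by (auto simp: subtree_def children_def)
next
  fix x' assume "x' \<in> (\<Union>c\<in>children x a. subtree c)"
  then obtain c where "par c = Some (x, a)" "in_hist par c x'" "x' \<in> X"
    by (auto simp: children_def subtree_def)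
  then show "x' \<in> {x' \<in> X. act_hist par x a x'}" by (auto simp: act_hist_iff_in_hist)
qed

lemma A_tau_eq_sum_subtree: "x \<in> X \<Longrightarrow> A_tau X A par x = (\<Sum>y\<in>subtree x. card (A y))"
proof (induction rule: subtree_induct)
  case (step x)
  have "(\<Sum>y\<in>subtree x. card (A y)) = card (A x) + (\<Sum>a\<in>A x. \<Sum>c\<in>children x a. \<Sum>y\<in>subtree c. card (A y))"
    by (rule sum_subtree[OF step.hyps])
  also have "\<dots> = (\<Sum>a\<in>A x. A_tau_act X A par x a)"
    by (simp add: A_tau_act_def act_hist_set_eq sum_Union_subtrees_children sum_Suc)
  finally show ?case by (simp add: A_tau_def)
qed

lemma A_tau_act_rec: "A_tau_act X A par x a = 1 + (\<Sum>c\<in>children x a. A_tau X A par c)"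
  using children_props
  by (simp add: A_tau_act_def act_hist_set_eq sum_Union_subtrees_children A_tau_eq_sum_subtree)

definition roots :: "'x set" where
  "roots = {x \<in> X. h x = 1}"

lemma ex_root_in_hist: "x' \<in> X \<Longrightarrow> \<exists>r\<in>roots. in_hist par r x'"
proof (induction "h x'" arbitrary: x' rule: less_induct)
  case less
  show ?case
  proof (cases "par x'")
    case None
    then have "x' \<in> roots" using less.prems depth_eq_1_iff by (simp add: roots_def)
    then show ?thesis by (intro bexI[of _ x'] in_hist.refl)
  next
    case (Some yb)
    then obtain y b where p: "par x' = Some (y, b)" by (cases yb) auto
    then have "y \<in> X" "h y < h x'" using parent_props[OF less.prems p] by auto
    then obtain r where "r \<in> roots" "in_hist par r y" using less.hyps by blast
    then show ?thesis using in_hist.step[of par x' y b r, OF p] by blast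
  qed
qed

lemma root_in_hist_unique:
  "r \<in> roots \<Longrightarrow> r' \<in> roots \<Longrightarrow> in_hist par r x' \<Longrightarrow> in_hist par r' x' \<Longrightarrow> x' \<in> X \<Longrightarrow> r = r'"
  using in_hist_depth_unique by (simp add: roots_def)

lemma sum_roots: "(\<Sum>x\<in>X. f x) = (\<Sum>r\<in>roots. \<Sum>y\<in>subtree r. f y)"
proof -
  have "X = (\<Union>r\<in>roots. subtree r)"
    using ex_root_in_hist by (auto simp: subtree_def roots_def)
  moreover have "(\<Sum>x\<in>(\<Union>r\<in>roots. subtree r). f x) = (\<Sum>r\<in>roots. \<Sum>y\<in>subtree r. f y)"
  proof (rule sum.UNION_disjoint)
    show "finite roots" using finite_X by (simp add: roots_def)
    show "\<forall>i\<in>roots. \<forall>j\<in>roots. i \<noteq> j \<longrightarrow> subtree i \<inter> subtree j = {}"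
      using root_in_hist_unique by (auto simp: subtree_def)
  qed (simp add: finite_subtree)
  ultimately show ?thesis by simp
qed

lemma total_actions_eq_sum_roots: "total_actions X A = (\<Sum>r\<in>roots. A_tau X A par r)"
  unfolding total_actions_def sum_roots
  by (rule sum.cong) (simp_all add: A_tau_eq_sum_subtree roots_def)

lemma finite_history_pairs: "x' \<in> X \<Longrightarrow> finite {(y, b). act_hist par y b x' \<and> P y b}"
proof (rule finite_subset)
  show "finite (Sigma X A)" using finite_X finite_A by auto
qed (use act_hist_props in auto)

lemma real_plan_from_self: "x \<in> X \<Longrightarrow> real_plan_from par \<mu> x x a' = \<mu> x a'"
proof -
  assume x: "x \<in> X"
  have "\<not> (act_hist par y b x \<and> in_hist par x y)" for y b
  proof
    assume yb: "act_hist par y b x \<and> in_hist par x y"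
    then have "y \<in> X" "h y < h x" using act_hist_props x by auto
    then show False using in_hist_props yb by fastforce
  qed
  then have no_pairs: "{(y, b). act_hist par y b x \<and> in_hist par x y} = {}" by blast
  show ?thesis unfolding real_plan_from_def no_pairs by simp
qed

lemma history_pairs_child:
  assumes c: "c \<in> children x a" and x': "x' \<in> subtree c"
  shows "{(y, b). act_hist par y b x' \<and> in_hist par x y}
       = insert (x, a) {(y, b). act_hist par y b x' \<and> in_hist par c y}"
    and "(x, a) \<notin> {(y, b). act_hist par y b x' \<and> in_hist par c y}"
proof -
  have c_props: "c \<in> X" "par c = Some (x, a)" "x \<in> X" "h c = h x + 1"
    using children_props[OF c] by auto
  have x'_props: "x' \<in> X" "in_hist par c x'" using x' by (auto simp: subtree_def)
  have "act_hist par x a x'"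
    unfolding act_hist_iff_in_hist using c_props(2) x'_props(2) by blast
  show "(x, a) \<notin> {(y, b). act_hist par y b x' \<and> in_hist par c y}"
    using in_hist_props[of c x] c_props by auto
  have "(y, b) = (x, a) \<or> in_hist par c y" if yb: "act_hist par y b x'" "in_hist par x y" for y b
    using in_hist_imp_eq_or_act_hist[OF yb(2)]
  proof
    assume "x = y"
    then show ?thesis
      using act_hist_action_unique[OF _ \<open>act_hist par x a x'\<close> x'_props(1)] yb(1) by simp
  next
    assume "\<exists>a0. act_hist par x a0 y"
    then obtain a0 c0 where c0: "par c0 = Some (x, a0)" "in_hist par c0 y"
      by (auto simp: act_hist_iff_in_hist)
    have c0x': "in_hist par c0 x'"
      using in_hist_trans[OF act_hist_imp_in_hist[OF yb(1)] c0(2)] .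
    then have "c0 \<in> X" using in_hist_props x'_props(1) by blast
    then have "h c0 = h c" using parent_props[OF _ c0(1)] c_props by simp
    then have "c0 = c" using in_hist_depth_unique[OF c0x' x'_props] by simp
    then show ?thesis using c0(2) by simp
  qed
  moreover have "in_hist par x y" if "in_hist par c y" for y
    using in_hist_trans[OF that in_hist_parent[of par c x a, OF c_props(2)]] .
  ultimately show "{(y, b). act_hist par y b x' \<and> in_hist par x y}
       = insert (x, a) {(y, b). act_hist par y b x' \<and> in_hist par c y}"
    using \<open>act_hist par x a x'\<close> in_hist.refl[of par x] by blast
qed

lemma real_plan_from_child:
  assumes "c \<in> children x a" and "x' \<in> subtree c"
  shows "real_plan_from par \<mu> x x' a' = \<mu> x a * real_plan_from par \<mu> c x' a'"
proof -
  have "x' \<in> X" using assms(2) by (simp add: subtree_def)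
  then show ?thesis
    unfolding real_plan_from_def history_pairs_child(1)[OF assms]
    by (simp add: prod.insert[OF finite_history_pairs history_pairs_child(2)[OF assms]])
qed

lemma real_plan_eq_from_root:
  assumes r: "r \<in> roots" and x': "x' \<in> subtree r"
  shows "real_plan par \<mu> x' a' = real_plan_from par \<mu> r x' a'"
proof -
  have x'_props: "x' \<in> X" "in_hist par r x'" using x' by (auto simp: subtree_def)
  have "in_hist par r y" if yb: "act_hist par y b x'" for y b
  proof -
    have "y \<in> X" using act_hist_props[OF yb x'_props(1)] by simp
    then obtain r' where r': "r' \<in> roots" "in_hist par r' y" using ex_root_in_hist by blast
    then have "in_hist par r' x'" using in_hist_trans[OF act_hist_imp_in_hist[OF yb]] by blast
    then have "r' = r" using root_in_hist_unique r r' x'_props by blast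
    then show ?thesis using r' by simp
  qed
  then have "{(y, b). act_hist par y b x'} = {(y, b). act_hist par y b x' \<and> in_hist par r y}"
    by auto
  then show ?thesis by (simp add: real_plan_def real_plan_from_def)
qed

definition ratio_sum :: "('x \<Rightarrow> 'a \<Rightarrow> real) \<Rightarrow> ('x \<Rightarrow> 'a \<Rightarrow> real) \<Rightarrow> 'x \<Rightarrow> real" where
  "ratio_sum \<mu>s \<mu> x =
     (\<Sum>y\<in>subtree x. \<Sum>a'\<in>A y. real_plan_from par \<mu> x y a' / real_plan_from par \<mu>s x y a')"

lemma ratio_sum_rec:
  assumes x: "x \<in> X"
  shows "ratio_sum \<mu>s \<mu> x = (\<Sum>a\<in>A x. \<mu> x a / \<mu>s x a * (1 + (\<Sum>c\<in>children x a. ratio_sum \<mu>s \<mu> c)))"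
proof -
  let ?f = "\<lambda>y. \<Sum>a'\<in>A y. real_plan_from par \<mu> x y a' / real_plan_from par \<mu>s x y a'"
  have "(\<Sum>y\<in>subtree c. ?f y) = \<mu> x a / \<mu>s x a * ratio_sum \<mu>s \<mu> c" if "c \<in> children x a" for a c
    using real_plan_from_child[OF that]
    by (simp add: ratio_sum_def sum_distrib_left)
  then have "ratio_sum \<mu>s \<mu> x = (\<Sum>a\<in>A x. \<mu> x a / \<mu>s x a)
      + (\<Sum>a\<in>A x. \<mu> x a / \<mu>s x a * (\<Sum>c\<in>children x a. ratio_sum \<mu>s \<mu> c))"
    unfolding ratio_sum_def sum_subtree[OF x, of ?f]
    by (simp add: real_plan_from_self[OF x] sum_distrib_left)
  then show ?thesis by (simp add: sum.distrib distrib_left)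
qed

lemma kappa_at_eq_SUP_ratio_sum: "kappa_at X A par \<mu>s x = (SUP \<mu>\<in>{\<mu>. is_policy X A \<mu>}. ratio_sum \<mu>s \<mu> x)"
  unfolding kappa_at_def ratio_sum_def subtree_def ..

lemma kappa_eq_SUP_ratio_sum_roots:
  "kappa X A par \<mu>s = (SUP \<mu>\<in>{\<mu>. is_policy X A \<mu>}. \<Sum>r\<in>roots. ratio_sum \<mu>s \<mu> r)"
  unfolding kappa_def sum_roots ratio_sum_def
  by (intro SUP_cong sum.cong) (simp_all add: real_plan_eq_from_root)

end

locale sampling_policy = info_tree +
  fixes \<mu>s
  assumes positive: "positive_policy X A \<mu>s"
begin

lemma \<mu>s_pos: "x \<in> X \<Longrightarrow> a \<in> A x \<Longrightarrow> \<mu>s x a > 0"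
  using positive by (simp add: positive_policy_def)

lemma \<mu>s_policy: "is_policy X A \<mu>s"
  using positive by (simp add: positive_policy_def)

definition greedy_value where
  "greedy_value x a = (1 + (\<Sum>c\<in>children x a. kappa_at X A par \<mu>s c)) / \<mu>s x a"

definition greedy_action where
  "greedy_action x = (SOME a. a \<in> A x \<and> greedy_value x a = Max (greedy_value x ` A x))"

definition greedy_policy where
  "greedy_policy x a = (if a = greedy_action x then 1 else 0)"

lemma greedy_action:
  assumes "x \<in> X"
  shows "greedy_action x \<in> A x" and "greedy_value x (greedy_action x) = Max (greedy_value x ` A x)"
proof -
  have "Max (greedy_value x ` A x) \<in> greedy_value x ` A x"
    using finite_A[OF assms] A_nonempty[OF assms] by simp
  then have "\<exists>a. a \<in> A x \<and> greedy_value x a = Max (greedy_value x ` A x)" by auto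
  then show "greedy_action x \<in> A x" "greedy_value x (greedy_action x) = Max (greedy_value x ` A x)"
    unfolding greedy_action_def by (metis (mono_tags, lifting) someI_ex)+
qed

lemma greedy_policy_is_policy: "is_policy X A greedy_policy"
  using greedy_action finite_A by (simp add: is_policy_def greedy_policy_def sum.delta')

lemma kappa_at_eq_if_optimal:
  assumes "is_policy X A \<mu>0"
    and "\<And>\<mu>. is_policy X A \<mu> \<Longrightarrow> ratio_sum \<mu>s \<mu> x \<le> ratio_sum \<mu>s \<mu>0 x"
  shows "kappa_at X A par \<mu>s x = ratio_sum \<mu>s \<mu>0 x"
  unfolding kappa_at_eq_SUP_ratio_sum using assms by (intro cSup_eq_maximum) auto

lemma ratio_sum_le_Max_greedy_value:
  assumes x: "x \<in> X" and \<mu>: "is_policy X A \<mu>"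
    and children: "\<And>a c. c \<in> children x a \<Longrightarrow> ratio_sum \<mu>s \<mu> c \<le> kappa_at X A par \<mu>s c"
  shows "ratio_sum \<mu>s \<mu> x \<le> Max (greedy_value x ` A x)"
proof -
  have "ratio_sum \<mu>s \<mu> x \<le> (\<Sum>a\<in>A x. \<mu> x a * greedy_value x a)"
    unfolding ratio_sum_rec[OF x] greedy_value_def
  proof (rule sum_mono)
    fix a assume a: "a \<in> A x"
    have "0 \<le> \<mu> x a / \<mu>s x a" using \<mu> x a \<mu>s_pos[OF x a] by (simp add: is_policy_def)
    moreover have "(\<Sum>c\<in>children x a. ratio_sum \<mu>s \<mu> c) \<le> (\<Sum>c\<in>children x a. kappa_at X A par \<mu>s c)"
      using children by (rule sum_mono)
    ultimately have "\<mu> x a / \<mu>s x a * (1 + (\<Sum>c\<in>children x a. ratio_sum \<mu>s \<mu> c))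
        \<le> \<mu> x a / \<mu>s x a * (1 + (\<Sum>c\<in>children x a. kappa_at X A par \<mu>s c))"
      by (intro mult_left_mono) simp_all
    then show "\<mu> x a / \<mu>s x a * (1 + (\<Sum>c\<in>children x a. ratio_sum \<mu>s \<mu> c))
        \<le> \<mu> x a * ((1 + (\<Sum>c\<in>children x a. kappa_at X A par \<mu>s c)) / \<mu>s x a)"
      by simp
  qed
  also have "\<dots> \<le> Max (greedy_value x ` A x)"
    using \<mu> x finite_A[OF x] by (intro convex_combination_le) (auto simp: is_policy_def)
  finally show ?thesis .
qed

lemma ratio_sum_greedy_policy:
  assumes x: "x \<in> X"
    and children: "\<And>a c. c \<in> children x a \<Longrightarrow> kappa_at X A par \<mu>s c = ratio_sum \<mu>s greedy_policy c"
  shows "ratio_sum \<mu>s greedy_policy x = Max (greedy_value x ` A x)"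
proof -
  have "ratio_sum \<mu>s greedy_policy x = (\<Sum>a\<in>A x. greedy_policy x a * greedy_value x a)"
    unfolding ratio_sum_rec[OF x] greedy_value_def using children by (intro sum.cong) simp_all
  also have "\<dots> = (\<Sum>a\<in>A x. if a = greedy_action x then greedy_value x a else 0)"
    by (intro sum.cong) (simp_all add: greedy_policy_def)
  also have "\<dots> = greedy_value x (greedy_action x)"
    using greedy_action(1)[OF x] finite_A[OF x] by (simp add: sum.delta')
  finally show ?thesis using greedy_action(2)[OF x] by simp
qed

lemma greedy_policy_optimal:
  "x \<in> X \<Longrightarrow> is_policy X A \<mu> \<Longrightarrow> ratio_sum \<mu>s \<mu> x \<le> ratio_sum \<mu>s greedy_policy x"
proof (induction arbitrary: \<mu> rule: subtree_induct)
  case (step x)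
  have kappa_children: "kappa_at X A par \<mu>s c = ratio_sum \<mu>s greedy_policy c"
    if "c \<in> children x a" for a c
    using step.IH[OF that] greedy_policy_is_policy by (intro kappa_at_eq_if_optimal)
  have "ratio_sum \<mu>s \<mu> c \<le> kappa_at X A par \<mu>s c" if "c \<in> children x a" for a c
    using step.IH[OF that step.prems] kappa_children[OF that] by simp
  then have "ratio_sum \<mu>s \<mu> x \<le> Max (greedy_value x ` A x)"
    by (rule ratio_sum_le_Max_greedy_value[OF step.hyps step.prems])
  then show ?case using ratio_sum_greedy_policy[OF step.hyps kappa_children] by simp
qed

lemma kappa_at_eq_ratio_sum_greedy: "x \<in> X \<Longrightarrow> kappa_at X A par \<mu>s x = ratio_sum \<mu>s greedy_policy x"
  using greedy_policy_optimal greedy_policy_is_policy by (intro kappa_at_eq_if_optimal)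

lemma kappa_at_eq_Max_greedy_value: "x \<in> X \<Longrightarrow> kappa_at X A par \<mu>s x = Max (greedy_value x ` A x)"
  using ratio_sum_greedy_policy kappa_at_eq_ratio_sum_greedy children_props
  by (simp add: kappa_at_eq_ratio_sum_greedy)

lemma kappa_at_rec:
  assumes "x \<in> X"
  shows "kappa_at X A par \<mu>s x = Max ((\<lambda>a. (1 + (\<Sum>x'\<in>{x'\<in>X. directly_follows par x' x a}.
           kappa_at X A par \<mu>s x')) / \<mu>s x a) ` A x)"
proof -
  have "{x'\<in>X. directly_follows par x' x a} = children x a" for a
    by (auto simp: children_def directly_follows_def)
  then show ?thesis using kappa_at_eq_Max_greedy_value[OF assms] by (simp add: greedy_value_def)
qed

lemma kappa_eq_sum_roots: "kappa X A par \<mu>s = (\<Sum>r\<in>roots. kappa_at X A par \<mu>s r)"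
proof -
  have "kappa X A par \<mu>s = (\<Sum>r\<in>roots. ratio_sum \<mu>s greedy_policy r)"
    unfolding kappa_eq_SUP_ratio_sum_roots
    using greedy_policy_is_policy greedy_policy_optimal
    by (intro cSup_eq_maximum) (auto intro!: sum_mono simp: roots_def)
  then show ?thesis
    by (simp add: kappa_at_eq_ratio_sum_greedy roots_def)
qed

lemma kappa_at_ge_A_tau: "x \<in> X \<Longrightarrow> real (A_tau X A par x) \<le> kappa_at X A par \<mu>s x"
proof (induction rule: subtree_induct)
  case (step x)
  have "real (A_tau X A par x) = (\<Sum>a\<in>A x. 1 + (\<Sum>c\<in>children x a. real (A_tau X A par c)))"
    by (simp add: A_tau_def[where x = x] A_tau_act_rec)
  also have "\<dots> \<le> (\<Sum>a\<in>A x. \<mu>s x a * greedy_value x a)"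
  proof (rule sum_mono)
    fix a assume "a \<in> A x"
    then have "\<mu>s x a \<noteq> 0" using \<mu>s_pos[OF step.hyps] by force
    then have "\<mu>s x a * greedy_value x a = 1 + (\<Sum>c\<in>children x a. kappa_at X A par \<mu>s c)"
      by (simp add: greedy_value_def)
    then show "1 + (\<Sum>c\<in>children x a. real (A_tau X A par c)) \<le> \<mu>s x a * greedy_value x a"
      using step.IH by (simp add: sum_mono)
  qed
  also have "\<dots> \<le> Max (greedy_value x ` A x)"
    using \<mu>s_policy step.hyps finite_A[OF step.hyps]
    by (intro convex_combination_le) (auto simp: is_policy_def)
  finally show ?case using kappa_at_eq_Max_greedy_value[OF step.hyps] by simp
qed

end

context info_tree
begin

lemma A_tau_act_pos: "0 < A_tau_act X A par x a"
  by (simp add: A_tau_act_def)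

lemma A_tau_pos: "x \<in> X \<Longrightarrow> 0 < A_tau X A par x"
  using finite_A A_nonempty A_tau_act_pos by (simp add: A_tau_def sum_pos)

lemma balanced_policy_positive: "positive_policy X A (balanced_policy X A par)"
proof -
  have "(\<Sum>a\<in>A x. balanced_policy X A par x a) = 1" if "x \<in> X" for x
    using A_tau_pos[OF that]
    by (simp add: balanced_policy_def A_tau_def flip: sum_divide_distrib of_nat_sum)
  moreover have "0 < balanced_policy X A par x a" if "x \<in> X" for x a
    using A_tau_pos[OF that] A_tau_act_pos by (simp add: balanced_policy_def)
  ultimately show ?thesis
    by (simp add: positive_policy_def is_policy_def less_imp_le)
qed

interpretation balanced: sampling_policy X H h A par "balanced_policy X A par"
  by unfold_locales (rule balanced_policy_positive)

lemma kappa_at_balanced_policy: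
  "x \<in> X \<Longrightarrow> kappa_at X A par (balanced_policy X A par) x = real (A_tau X A par x)"
proof (induction rule: subtree_induct)
  case (step x)
  have "balanced.greedy_value x a = real (A_tau X A par x)" for a
  proof -
    have "1 + (\<Sum>c\<in>children x a. kappa_at X A par (balanced_policy X A par) c)
        = real (A_tau_act X A par x a)"
      using step.IH by (simp add: A_tau_act_rec)
    then show ?thesis
      using A_tau_pos[OF step.hyps] A_tau_act_pos[of x a]
      by (simp add: balanced.greedy_value_def balanced_policy_def)
  qed
  then have "balanced.greedy_value x ` A x = {real (A_tau X A par x)}"
    using A_nonempty[OF step.hyps] by auto
  then show ?case using balanced.kappa_at_eq_Max_greedy_value[OF step.hyps] by simp
qed

lemma kappa_balanced_policy: "kappa X A par (balanced_policy X A par) = real (total_actions X A)"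
  using kappa_at_balanced_policy
  by (simp add: balanced.kappa_eq_sum_roots total_actions_eq_sum_roots roots_def)

end

theorem mainTheorem10:
  fixes X :: "'x set" and H :: nat and h :: "'x \<Rightarrow> nat" and A :: "'x \<Rightarrow> 'a set"
    and par :: "'x \<Rightarrow> ('x \<times> 'a) option" and \<mu>s :: "'x \<Rightarrow> 'a \<Rightarrow> real"
  assumes G: "game_structure X H h A par"
    and pos: "positive_policy X A \<mu>s"
  shows "(\<forall>x\<in>X. kappa_at X A par \<mu>s x =
            Max ((\<lambda>a. (1 + (\<Sum>x'\<in>{x'\<in>X. directly_follows par x' x a}. kappa_at X A par \<mu>s x'))
                       / \<mu>s x a) ` A x))
       \<and> kappa X A par \<mu>s = (\<Sum>x\<in>{x\<in>X. h x = 1}. kappa_at X A par \<mu>s x)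
       \<and> (\<forall>x\<in>X. kappa_at X A par \<mu>s x \<ge> real (A_tau X A par x))
       \<and> (\<forall>x\<in>X. kappa_at X A par (balanced_policy X A par) x = real (A_tau X A par x))
       \<and> kappa X A par (balanced_policy X A par) = real (total_actions X A)"
proof -
  interpret sampling_policy X H h A par \<mu>s
    using G pos by (simp add: sampling_policy_def info_tree_def sampling_policy_axioms_def)
  show ?thesis
    using kappa_at_rec kappa_eq_sum_roots kappa_at_ge_A_tau
      kappa_at_balanced_policy kappa_balanced_policy
    by (simp add: roots_def)
qed

end
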